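(* Let $\beta_{2k}:=B_{2k}/(2k)!$. For every even integer $N\ge4$ and every integer $i$ with $0\le i\le N/2-1$, $$\sum_{k=0}^{N/2-1-\lfloor i/2\rfloor}\beta_{2k}\beta_{N-2k}\binom{N-2k}{i}+\sum_{l=0}^{\lfloor i/2\rfloor}\beta_{2l}\beta_{N-2l}\binom{N-2l}{i-2l+1}=0.$$
   Context: Bernoulli numbers are defined by $\frac{z}{e^z-1}=\sum_{m\ge0}\frac{B_m}{m!}z^m$; equivalently $\frac x2\coth\frac x2=\sum_{J\ge0}\beta_{2J}x^{2J}$. Convention: $\binom ab=0$ if $b<0$ or $b>a$. *)

theory Defs
  imports Complex_Main
begin

text \<open>Bernoulli numbers with the convention z/(e^z - 1) = sum B_m z^m/m!, i.e. B_1 = -1/2,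
  characterised by the standard recurrence sum_{k<=n} (n+1 choose k) B_k = 0 for n >= 1.\<close>
fun bernoulli :: "nat \<Rightarrow> real" where
  "bernoulli n = (if n = 0 then 1
     else - (\<Sum>k<n. of_nat ((n+1) choose k) * bernoulli k) / of_nat (n+1))"

declare bernoulli.simps[simp del]

definition beta :: "nat \<Rightarrow> real" where
  "beta m = bernoulli m / fact m"

end

(*
  The series E(x) = x/(e^x - 1) + x/2 = (x/2) coth(x/2) is even, with coefficients beta_2J.
  The addition theorem coth(u + v) (coth u + coth v) = 1 + coth u coth v, taken at u = x/2 and
  v = yx/2 and cleared of denominators, becomes the identity

    4 E((1+y)x) (E(yx) + y E(x)) = 4 (1+y) E(yx) E(x) + y (1+y) x^2

  of power series in x over R[y]. For N <> 2 the coefficient of x^N y^(i+1) is a relation between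
  three convolutions of the betas with binomial weights. The first two are the sums of the theorem
  plus one boundary term (from the first sum if i is even, from the second if i is odd), and the
  third sum has a single nonzero term, which equals that boundary term (for even i by the
  symmetry of beta_2k beta_(N-2k) under k <-> N/2 - k).
*)
theory Submission
  imports Defs "HOL-Computational_Algebra.Formal_Power_Series" "HOL-Computational_Algebra.Polynomial"
begin

unbundle fps_syntax

text \<open>\<open>fps_dilate a A\<close> is \<open>A(a x)\<close> for a polynomial \<open>a\<close> in a second variable \<open>y\<close>, i.e.
  a power series in \<open>x\<close> over \<open>'a[y]\<close>.\<close>
definition fps_dilate :: "'a::comm_ring_1 poly \<Rightarrow> 'a fps \<Rightarrow> 'a poly fps" where
  "fps_dilate a A = Abs_fps (\<lambda>n. smult (A $ n) (a ^ n))"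

lemma fps_dilate_nth [simp]: "fps_dilate a A $ n = smult (A $ n) (a ^ n)"
  by (simp add: fps_dilate_def)

lemma fps_dilate_add: "fps_dilate a (A + B) = fps_dilate a A + fps_dilate a B"
  by (rule fps_ext) (simp add: smult_add_left)

lemma fps_dilate_diff: "fps_dilate a (A - B) = fps_dilate a A - fps_dilate a B"
  by (rule fps_ext) (simp add: smult_diff_left)

lemma fps_dilate_1: "fps_dilate a 1 = 1"
  by (rule fps_ext) (simp add: fps_one_nth)

lemma fps_dilate_numeral: "fps_dilate a (numeral k) = numeral k"
  by (rule fps_ext) (simp add: numeral_fps_const numeral_poly)

lemma fps_dilate_X: "fps_dilate a fps_X = fps_const a * fps_X"
  by (rule fps_ext) (simp add: fps_X_def)

lemma fps_dilate_mult: "fps_dilate a (A * B) = fps_dilate a A * fps_dilate a B"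
proof (rule fps_ext)
  fix n
  have "(fps_dilate a A * fps_dilate a B) $ n = (\<Sum>i=0..n. smult (A $ i * B $ (n - i)) (a ^ n))"
    unfolding fps_mult_nth fps_dilate_nth
    by (intro sum.cong refl) (simp add: power_add[symmetric] mult_ac)
  also have "\<dots> = smult ((A * B) $ n) (a ^ n)"
    by (simp add: fps_mult_nth smult_sum)
  finally show "fps_dilate a (A * B) $ n = (fps_dilate a A * fps_dilate a B) $ n"
    by simp
qed

lemma fps_dilate_exp_add:
  fixes a b :: "'a::field_char_0 poly"
  shows "fps_dilate (a + b) (fps_exp 1) = fps_dilate a (fps_exp 1) * fps_dilate b (fps_exp 1)"
proof (rule fps_ext)
  fix n
  have "smult (1 / fact n) ((a + b) ^ n)
      = [:1 / fact n:] * (\<Sum>k=0..n. of_nat (n choose k) * a ^ k * b ^ (n - k))"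
    by (simp add: binomial_ring atLeast0AtMost)
  also have "\<dots> = (\<Sum>k=0..n. smult (1 / fact k * (1 / fact (n - k))) (a ^ k * b ^ (n - k)))"
    unfolding sum_distrib_left
    by (intro sum.cong refl) (simp add: binomial_fact of_nat_poly field_simps)
  finally show "fps_dilate (a + b) (fps_exp 1) $ n
      = (fps_dilate a (fps_exp 1) * fps_dilate b (fps_exp 1)) $ n"
    by (simp add: fps_mult_nth mult_ac)
qed

lemma fps_dilate_0_exp: "fps_dilate 0 (fps_exp (1::'a::field)) = 1"
  by (rule fps_ext) (simp add: fps_one_nth)

lemma fps_dilate_exp_minus_1_nonzero:
  fixes a :: "'a::field poly"
  assumes "a \<noteq> 0"
  shows "fps_dilate a (fps_exp 1) - 1 \<noteq> 0"
proof
  assume "fps_dilate a (fps_exp 1) - 1 = 0"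
  then have "(fps_dilate a (fps_exp 1) - 1) $ 1 = 0"
    by simp
  with assms show False
    by simp
qed

lemma coeff_fps_dilate_convolution:
  "coeff ((fps_const p * (fps_dilate a A * fps_dilate b B)) $ n) m
     = (\<Sum>j=0..n. A $ j * B $ (n - j) * coeff (p * a ^ j * b ^ (n - j)) m)"
  unfolding fps_mult_left_const_nth
  by (simp add: fps_mult_nth sum_distrib_left coeff_sum mult_ac)

lemma coeff_monom_mult_binomial_power:
  "coeff (monom 1 k * [:1, 1:] ^ n) m
     = (if k \<le> m then of_nat (n choose (m - k)) else (0::'a::comm_semiring_1))"
proof (cases "m - k \<le> n")
  case True
  then show ?thesis
    by (simp add: coeff_monom_mult coeff_linear_poly_power)
next
  case False
  have "degree ([:1::'a, 1:] ^ n) \<le> n"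
    using degree_power_le[of "[:1::'a, 1:]" n] by simp
  with False show ?thesis
    by (simp add: coeff_monom_mult coeff_eq_0 binomial_eq_0)
qed

lemma bernoulli_recurrence:
  assumes "n \<ge> 2"
  shows "(\<Sum>k<n. real (n choose k) * bernoulli k) = 0"
proof -
  obtain m where m: "n = Suc m" "m \<ge> 1"
    using assms by (cases n) auto
  then have "bernoulli m = - (\<Sum>k<m. real (n choose k) * bernoulli k) / real n"
    by (subst bernoulli.simps) simp
  then show ?thesis
    using m by (simp add: field_simps)
qed

definition bernoulli_fps :: "real fps" where
  "bernoulli_fps = Abs_fps beta"

lemma bernoulli_fps_times_exp_minus_1: "bernoulli_fps * (fps_exp 1 - 1) = fps_X"
proof (rule fps_ext)
  fix n
  show "(bernoulli_fps * (fps_exp 1 - 1)) $ n = fps_X $ n"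
  proof (cases "n \<ge> 2")
    case True
    have "(bernoulli_fps * (fps_exp 1 - 1)) $ n = (\<Sum>k<n. bernoulli k / fact k / fact (n - k))"
      by (simp add: fps_mult_nth bernoulli_fps_def beta_def fps_one_nth atLeast0AtMost
          lessThan_Suc_atMost[symmetric] sum.lessThan_Suc mult_ac)
    also have "\<dots> = (\<Sum>k<n. real (n choose k) * bernoulli k) / fact n"
      unfolding sum_divide_distrib
      by (intro sum.cong refl) (simp add: binomial_fact field_simps)
    finally show ?thesis
      using True bernoulli_recurrence[of n] by simp
  next
    case False
    then consider "n = 0" | "n = 1"
      by linarith
    then show ?thesis
      by cases (simp_all add: fps_mult_nth bernoulli_fps_def beta_def bernoulli.simps)
  qed
qed

text \<open>\<open>x/(e^x - 1) + x/2 = (x/2) coth(x/2)\<close>\<close>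
definition half_coth_fps :: "real fps" where
  "half_coth_fps = bernoulli_fps + fps_const (1/2) * fps_X"

lemma half_coth_fps_equation: "2 * half_coth_fps * (fps_exp 1 - 1) = fps_X * (fps_exp 1 + 1)"
proof -
  have half: "2 * fps_const (1/2) = (1 :: real fps)"
    by (simp add: numeral_fps_const fps_const_mult[symmetric])
  have "2 * half_coth_fps * (fps_exp 1 - 1)
      = 2 * (bernoulli_fps * (fps_exp 1 - 1)) + (2 * fps_const (1/2)) * fps_X * (fps_exp 1 - 1)"
    unfolding half_coth_fps_def by (simp add: algebra_simps)
  also have "\<dots> = 2 * fps_X + fps_X * (fps_exp 1 - 1)"
    unfolding bernoulli_fps_times_exp_minus_1 half by simp
  also have "\<dots> = fps_X * (fps_exp 1 + 1)"
    by (simp add: algebra_simps)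
  finally show ?thesis .
qed

lemma half_coth_fps_dilate_equation:
  "2 * fps_dilate a half_coth_fps * (fps_dilate a (fps_exp 1) - 1)
     = fps_const a * fps_X * (fps_dilate a (fps_exp 1) + 1)"
  using arg_cong[OF half_coth_fps_equation, of "fps_dilate a"]
  by (simp add: fps_dilate_mult fps_dilate_add fps_dilate_diff fps_dilate_1 fps_dilate_numeral
      fps_dilate_X)

lemma half_coth_fps_nth_odd:
  assumes "odd n"
  shows "half_coth_fps $ n = 0"
proof -
  \<comment> \<open>\<open>E(-x)\<close> and \<open>E(x)\<close> solve the same equation, since \<open>e^(-x) e^x = 1\<close>.\<close>
  define e_minus where "e_minus = fps_dilate (-1) (fps_exp (1::real))"
  define e_plus where "e_plus = fps_dilate 1 (fps_exp (1::real))"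
  have "e_minus * e_plus = 1"
    using fps_dilate_exp_add[of "-1" 1] by (simp add: e_minus_def e_plus_def fps_dilate_0_exp)
  moreover have "2 * fps_dilate (-1) half_coth_fps * (e_minus - 1) = - fps_X * (e_minus + 1)"
    using half_coth_fps_dilate_equation[of "-1"] by (simp add: e_minus_def fps_const_neg[symmetric])
  moreover have "2 * fps_dilate 1 half_coth_fps * (e_plus - 1) = fps_X * (e_plus + 1)"
    using half_coth_fps_dilate_equation[of 1] by (simp add: e_plus_def)
  ultimately have "2 * (fps_dilate (-1) half_coth_fps - fps_dilate 1 half_coth_fps) * (e_plus - 1) = 0"
    by algebra
  moreover have "e_plus - 1 \<noteq> 0"
    unfolding e_plus_def by (rule fps_dilate_exp_minus_1_nonzero) simp
  ultimately have "fps_dilate (-1) half_coth_fps $ n = fps_dilate 1 half_coth_fps $ n"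
    by simp
  then have "coeff (fps_dilate (-1) half_coth_fps $ n) 0 = coeff (fps_dilate 1 half_coth_fps $ n) 0"
    by simp
  with assms show ?thesis
    by (simp add: coeff_0_power)
qed

lemma half_coth_fps_nth_even:
  assumes "even n"
  shows "half_coth_fps $ n = beta n"
  using assms by (cases "n = 1") (auto simp: half_coth_fps_def bernoulli_fps_def fps_X_nth)

text \<open>The addition theorem \<open>coth(u + v) (coth u + coth v) = 1 + coth u coth v\<close> at \<open>u = ax/2\<close>,
  \<open>v = bx/2\<close>, multiplied by \<open>(e^(ax) - 1) (e^(bx) - 1) (e^((a+b)x) - 1)\<close>.\<close>
lemma half_coth_fps_addition:
  fixes a b :: "real poly"
  assumes "a \<noteq> 0" "b \<noteq> 0" "a + b \<noteq> 0"
  shows "4 * (fps_const b * (fps_dilate a half_coth_fps * fps_dilate (a + b) half_coth_fps)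
              + fps_const a * (fps_dilate b half_coth_fps * fps_dilate (a + b) half_coth_fps))
       = 4 * (fps_const (a + b) * (fps_dilate a half_coth_fps * fps_dilate b half_coth_fps))
         + fps_const (a * b * (a + b)) * fps_X ^ 2"
    (is "?lhs = ?rhs")
proof -
  define e where "e c = fps_dilate c (fps_exp (1::real))" for c
  define H where "H c = fps_dilate c half_coth_fps" for c
  have H_eq: "2 * H c * (e c - 1) = fps_const c * fps_X * (e c + 1)" for c
    unfolding e_def H_def by (rule half_coth_fps_dilate_equation)
  have "(?lhs - ?rhs) * ((e a - 1) * (e b - 1) * (e (a + b) - 1)) = 0"
    using H_eq[of a] H_eq[of b] H_eq[of "a + b"] fps_dilate_exp_add[of a b]
      fps_const_add[of a b] fps_const_mult[of a b] fps_const_mult[of "a * b" "a + b"]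
    unfolding H_def[symmetric] e_def[symmetric] by algebra
  moreover have "e c - 1 \<noteq> 0" if "c \<noteq> 0" for c
    unfolding e_def using that by (rule fps_dilate_exp_minus_1_nonzero)
  ultimately show ?thesis
    using assms by simp
qed

lemma half_coth_fps_addition_nth:
  fixes a b :: "real poly"
  assumes "a \<noteq> 0" "b \<noteq> 0" "a + b \<noteq> 0" "n \<noteq> 2"
  shows "(fps_const b * (fps_dilate a half_coth_fps * fps_dilate (a + b) half_coth_fps)
          + fps_const a * (fps_dilate b half_coth_fps * fps_dilate (a + b) half_coth_fps)) $ n
       = (fps_const (a + b) * (fps_dilate a half_coth_fps * fps_dilate b half_coth_fps)) $ n"
    (is "?L $ n = ?R $ n")
proof -
  have "(fps_const 4 * ?L) $ n = (fps_const 4 * ?R) $ n"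
    using arg_cong[OF half_coth_fps_addition[OF assms(1-3)], of "\<lambda>F. F $ n"] assms(4)
    by (simp only: numeral_fps_const fps_add_nth fps_mult_left_const_nth fps_X_power_nth) simp
  then show ?thesis
    by simp
qed

lemma half_coth_convolution_identity:
  assumes "N \<noteq> 2"
  shows "(\<Sum>j=0..N. half_coth_fps $ j * half_coth_fps $ (N - j) * real ((N - j) choose r))
       + (\<Sum>j=0..N. half_coth_fps $ j * half_coth_fps $ (N - j)
            * (if j \<le> r + 1 then real ((N - j) choose (r + 1 - j)) else 0))
       = (\<Sum>j=0..N. half_coth_fps $ j * half_coth_fps $ (N - j)
            * (if j \<le> r + 1 then real (1 choose (r + 1 - j)) else 0))"
proof -
  \<comment> \<open>the coefficient of \<open>x^N y^(r+1)\<close> in the addition theorem at \<open>a = y\<close>, \<open>b = 1\<close>\<close>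
  define y :: "real poly" where "y = monom 1 1"
  have y_plus_1: "y + 1 = [:1, 1:]"
    by (simp add: y_def monom_altdef one_pCons)
  have "y \<noteq> 0" "y + 1 \<noteq> 0"
    unfolding y_plus_1 by (simp_all add: y_def)
  note coeff_eq = arg_cong[OF half_coth_fps_addition_nth[OF this(1) one_neq_zero this(2) assms],
      of "\<lambda>p. coeff p (r + 1)"]
  have y_power: "y ^ j = monom 1 j" for j
    by (simp add: y_def monom_power)
  have coeffs: "coeff (y * 1 ^ j * [:1, 1:] ^ (N - j)) (r + 1) = real ((N - j) choose r)"
    "coeff (1 * y ^ j * [:1, 1:] ^ (N - j)) (r + 1)
         = (if j \<le> r + 1 then real ((N - j) choose (r + 1 - j)) else 0)"
    "coeff ([:1, 1:] * y ^ j * 1 ^ (N - j)) (r + 1)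
         = (if j \<le> r + 1 then real (1 choose (r + 1 - j)) else 0)" for j
    using coeff_monom_mult_binomial_power[of 1 "N - j" "r + 1"]
      coeff_monom_mult_binomial_power[of j "N - j" "r + 1"]
      coeff_monom_mult_binomial_power[of j 1 "r + 1"]
    unfolding y_power by (simp_all add: y_def mult.commute)
  from coeff_eq show ?thesis
    unfolding fps_add_nth coeff_add coeff_fps_dilate_convolution y_plus_1
    unfolding coeffs by linarith
qed

lemma half_coth_convolution_even:
  assumes "N = 2 * M"
  shows "(\<Sum>j=0..N. half_coth_fps $ j * half_coth_fps $ (N - j) * g j)
       = (\<Sum>k=0..M. beta (2 * k) * beta (N - 2 * k) * g (2 * k))"
proof -
  have "(\<Sum>k=0..M. beta (2 * k) * beta (N - 2 * k) * g (2 * k))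
      = (\<Sum>j\<in>(*) 2 ` {0..M}. half_coth_fps $ j * half_coth_fps $ (N - j) * g j)"
    using assms by (subst sum.reindex) (auto simp: inj_on_def half_coth_fps_nth_even)
  also have "\<dots> = (\<Sum>j=0..N. half_coth_fps $ j * half_coth_fps $ (N - j) * g j)"
  proof (intro sum.mono_neutral_left ballI)
    fix j
    assume "j \<in> {0..N} - (*) 2 ` {0..M}"
    then have "odd j"
      using assms by (auto elim!: evenE)
    then show "half_coth_fps $ j * half_coth_fps $ (N - j) * g j = 0"
      by (simp add: half_coth_fps_nth_odd)
  qed (use assms in auto)
  finally show ?thesis ..
qed

lemma sum_atLeast0_atMost_eq_prefix_add_next:
  fixes f :: "nat \<Rightarrow> 'a::comm_monoid_add"
  assumes "K < M" and "\<And>k. Suc K < k \<Longrightarrow> k \<le> M \<Longrightarrow> f k = 0"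
  shows "(\<Sum>k=0..M. f k) = (\<Sum>k=0..K. f k) + f (Suc K)"
proof -
  have "(\<Sum>k=0..M. f k) = (\<Sum>k=0..Suc K. f k)"
    using assms by (intro sum.mono_neutral_right) auto
  then show ?thesis
    by simp
qed

lemma beta_choose_sum_truncate:
  assumes "N = 2 * M" "i < M"
  shows "(\<Sum>k=0..M. beta (2 * k) * beta (N - 2 * k) * real ((N - 2 * k) choose i))
       = (\<Sum>k=0..M - 1 - i div 2. beta (2 * k) * beta (N - 2 * k) * real ((N - 2 * k) choose i))
         + (if even i then beta i * beta (N - i) else 0)"
proof -
  define K where "K = M - 1 - i div 2"
  have "2 * Suc K = N - 2 * (i div 2)" "N - 2 * Suc K = 2 * (i div 2)"
    using assms by (auto simp: K_def)
  then have "beta (2 * Suc K) * beta (N - 2 * Suc K) * real ((N - 2 * Suc K) choose i)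
      = (if even i then beta i * beta (N - i) else 0)"
    by (cases "even i") (simp_all add: mult.commute binomial_eq_0 odd_pos)
  moreover have "(\<Sum>k=0..M. beta (2 * k) * beta (N - 2 * k) * real ((N - 2 * k) choose i))
      = (\<Sum>k=0..K. beta (2 * k) * beta (N - 2 * k) * real ((N - 2 * k) choose i))
        + beta (2 * Suc K) * beta (N - 2 * Suc K) * real ((N - 2 * Suc K) choose i)"
    using assms by (intro sum_atLeast0_atMost_eq_prefix_add_next) (auto simp: K_def binomial_eq_0)
  ultimately show ?thesis
    by (simp add: K_def)
qed

lemma beta_shifted_choose_sum_truncate:
  assumes "i < M"
  shows "(\<Sum>k=0..M. beta (2 * k) * beta (N - 2 * k)
            * (if 2 * k \<le> i + 1 then real ((N - 2 * k) choose (i + 1 - 2 * k)) else 0))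
       = (\<Sum>l=0..i div 2. beta (2 * l) * beta (N - 2 * l) * real ((N - 2 * l) choose (i + 1 - 2 * l)))
         + (if odd i then beta (i + 1) * beta (N - (i + 1)) else 0)"
proof -
  have "beta (2 * Suc (i div 2)) * beta (N - 2 * Suc (i div 2))
          * (if 2 * Suc (i div 2) \<le> i + 1
             then real ((N - 2 * Suc (i div 2)) choose (i + 1 - 2 * Suc (i div 2))) else 0)
      = (if odd i then beta (i + 1) * beta (N - (i + 1)) else 0)"
    by (cases "even i") (auto elim!: evenE oddE)
  moreover have "(\<Sum>k=0..i div 2. beta (2 * k) * beta (N - 2 * k)
            * (if 2 * k \<le> i + 1 then real ((N - 2 * k) choose (i + 1 - 2 * k)) else 0))
      = (\<Sum>l=0..i div 2. beta (2 * l) * beta (N - 2 * l) * real ((N - 2 * l) choose (i + 1 - 2 * l)))"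
    by (intro sum.cong) auto
  moreover have "i div 2 < M"
    using assms div_le_dividend le_less_trans by blast
  ultimately show ?thesis
    by (subst sum_atLeast0_atMost_eq_prefix_add_next[where K = "i div 2"]) auto
qed

lemma beta_one_choose_sum:
  assumes "i < M"
  shows "(\<Sum>k=0..M. beta (2 * k) * beta (N - 2 * k)
            * (if 2 * k \<le> i + 1 then real (1 choose (i + 1 - 2 * k)) else 0))
       = beta (2 * ((i + 1) div 2)) * beta (N - 2 * ((i + 1) div 2))"
proof -
  have "(\<Sum>k=0..M. beta (2 * k) * beta (N - 2 * k)
            * (if 2 * k \<le> i + 1 then real (1 choose (i + 1 - 2 * k)) else 0))
      = (\<Sum>k\<in>{(i + 1) div 2}. beta (2 * k) * beta (N - 2 * k)
            * (if 2 * k \<le> i + 1 then real (1 choose (i + 1 - 2 * k)) else 0))"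
    using assms by (intro sum.mono_neutral_right) (auto simp: binomial_eq_0)
  also have "\<dots> = beta (2 * ((i + 1) div 2)) * beta (N - 2 * ((i + 1) div 2))"
    by (cases "even i") (auto elim!: evenE oddE)
  finally show ?thesis .
qed

theorem mainTheorem8:
  fixes N i :: nat
  assumes "even N" and "N \<ge> 4" and "i \<le> N div 2 - 1"
  shows "(\<Sum>k = 0..N div 2 - 1 - i div 2. beta (2*k) * beta (N - 2*k) * real ((N - 2*k) choose i))
       + (\<Sum>l = 0..i div 2. beta (2*l) * beta (N - 2*l) * real ((N - 2*l) choose (i + 1 - 2*l))) = 0"
proof -
  obtain M where N: "N = 2 * M"
    using assms(1) by (elim evenE)
  then have "N div 2 = M" "i < M" "N \<noteq> 2"
    using assms(2,3) by auto
  from half_coth_convolution_identity[OF \<open>N \<noteq> 2\<close>, of i]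
  have "(\<Sum>k=0..M. beta (2 * k) * beta (N - 2 * k) * real ((N - 2 * k) choose i))
       + (\<Sum>k=0..M. beta (2 * k) * beta (N - 2 * k)
            * (if 2 * k \<le> i + 1 then real ((N - 2 * k) choose (i + 1 - 2 * k)) else 0))
       = (\<Sum>k=0..M. beta (2 * k) * beta (N - 2 * k)
            * (if 2 * k \<le> i + 1 then real (1 choose (i + 1 - 2 * k)) else 0))"
    unfolding half_coth_convolution_even[OF N] .
  then show ?thesis
    unfolding beta_choose_sum_truncate[OF N \<open>i < M\<close>]
      beta_shifted_choose_sum_truncate[OF \<open>i < M\<close>] beta_one_choose_sum[OF \<open>i < M\<close>]
      \<open>N div 2 = M\<close>
    by (cases "even i") (auto elim!: evenE oddE)
qed

end
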